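(* Let $k\ge1$, $s=2k+1$, and let $f:[-k,k]^2\to[n]^2$ be injective with number of tiles $|T(f)|=t+1\ge2$. Then $$\gamma(f)\ge t\Big(2-\frac{2}{s}\Big).$$ Moreover, if two tiles of $f$ have more than $35$ elements each, then $$\gamma(f)\ge 2t\Big(1-\frac1s\Big)+4.$$
   Context: Every vertex $x\in[n]^2$ has four incident edges $\uparrow(x),\downarrow(x),\rightarrow(x),\leftarrow(x)$, where $\rightarrow(i,j)=\leftarrow(i+1,j)$ is the edge between $(i,j)$ and $(i+1,j)$ and $\uparrow(i,j)=\downarrow(i,j+1)$ the edge between $(i,j)$ and $(i,j+1)$; for boundary vertices the edges leading out of $[n]^2$ are included. The tiles $T(f)$ of $f$ are the connected components of the graph on $f([-k,k]^2)$ in which $a,b$ are adjacent iff $a-b\in\{\pm(0,1),\pm(1,0)\}$. The constraint graph $G(f)=(V,E)$ is the multigraph whose vertices are grid edges and whose edge multiset consists of the pair $(\rightarrow(f(u)),\leftarrow(f(u+(1,0))))$ for each $u$ with $u,u+(1,0)\in[-k,k]^2$ and $f(u+(1,0))\neq f(u)+(1,0)$, and the pair $(\uparrow(f(u)),\downarrow(f(u+(0,1))))$ for each $u$ with $u,u+(0,1)\in[-k,k]^2$ and $f(u+(0,1))\ne f(u)+(0,1)$; $V$ is the set of grid edges appearing in some pair. $\gamma(f)=|V|-(\text{number of connected components of }G(f))$. *)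

theory Defs
  imports Complex_Main
begin

text \<open>A grid edge is represented by its lower/left
endpoint: H (i,j) is the edge between (i,j) and (i+1,j); V (i,j) the edge between
(i,j) and (i,j+1). Edges leaving [n]^2 are thereby automatically included.\<close>

datatype gedge = H "int \<times> int" | V "int \<times> int"

fun eright :: "int \<times> int \<Rightarrow> gedge" where "eright (i,j) = H (i,j)"
fun eleft  :: "int \<times> int \<Rightarrow> gedge" where "eleft (i,j) = H (i-1,j)"
fun eup    :: "int \<times> int \<Rightarrow> gedge" where "eup (i,j) = V (i,j)"
fun edown  :: "int \<times> int \<Rightarrow> gedge" where "edown (i,j) = V (i,j-1)"

definition box :: "int \<Rightarrow> (int \<times> int) set" where
  "box k = {-k..k} \<times> {-k..k}"

definition grid :: "int \<Rightarrow> (int \<times> int) set" where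
  "grid n = {1..n} \<times> {1..n}"

definition components :: "'a set \<Rightarrow> ('a \<times> 'a) set \<Rightarrow> 'a set set" where
  "components A E = A // (((E \<union> E\<inverse>) \<inter> (A \<times> A))\<^sup>* \<inter> (A \<times> A))"

definition gadj :: "int \<times> int \<Rightarrow> int \<times> int \<Rightarrow> bool" where
  "gadj a b \<longleftrightarrow> (fst a - fst b, snd a - snd b) \<in> {(0,1),(0,-1),(1,0),(-1,0)}"

definition tiles :: "(int \<times> int \<Rightarrow> int \<times> int) \<Rightarrow> int \<Rightarrow> (int \<times> int) set set" where
  "tiles f k = components (f ` box k) {(a,b). a \<in> f ` box k \<and> b \<in> f ` box k \<and> gadj a b}"

text \<open>Edge set of the constraint graph (multiplicities are irrelevant for |V| and components).\<close>
definition cpairs :: "(int \<times> int \<Rightarrow> int \<times> int) \<Rightarrow> int \<Rightarrow> (gedge \<times> gedge) set" where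
  "cpairs f k =
     {(eright (f (a,b)), eleft (f (a+1,b))) | a b.
        (a,b) \<in> box k \<and> (a+1,b) \<in> box k \<and> f (a+1,b) \<noteq> (fst (f (a,b)) + 1, snd (f (a,b)))}
   \<union> {(eup (f (a,b)), edown (f (a,b+1))) | a b.
        (a,b) \<in> box k \<and> (a,b+1) \<in> box k \<and> f (a,b+1) \<noteq> (fst (f (a,b)), snd (f (a,b)) + 1)}"

definition cverts :: "(int \<times> int \<Rightarrow> int \<times> int) \<Rightarrow> int \<Rightarrow> gedge set" where
  "cverts f k = fst ` cpairs f k \<union> snd ` cpairs f k"

definition gamma :: "(int \<times> int \<Rightarrow> int \<times> int) \<Rightarrow> int \<Rightarrow> int" where
  "gamma f k = int (card (cverts f k)) - int (card (components (cverts f k) (cpairs f k)))"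

end

theory Submission
  imports Defs
begin

(* Each tile T meets r rows and c columns of the grid. In every row of T the last point p in
   direction d = (1,0) is an exit: p + d is not in the image of f. Unless p is the image of a point
   on the side of the box facing d, the grid edge leaving p towards d is a vertex of G(f), and
   distinct exits (over all four directions) give distinct vertices. Hence
   |V| >= 2 * sum_T (r + c) - 4s, and as every vertex of G(f) has a neighbour, G(f) has at most
   |V|/2 components, so gamma(f) >= sum_T (r + c) - 2s. A tile of area a <= min(rc, s^2) satisfies
   2(s + a) <= (r + c)(s + 1), and 12s + 2a <= (r + c)(s + 6) if a >= 36; summing over the t + 1
   tiles, whose areas add up to s^2, yields both bounds. *)

definition component_rel :: "'a set \<Rightarrow> ('a \<times> 'a) set \<Rightarrow> ('a \<times> 'a) set" where
  "component_rel A E = ((E \<union> E\<inverse>) \<inter> (A \<times> A))\<^sup>* \<inter> (A \<times> A)"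

lemma components_eq_quotient: "components A E = A // component_rel A E"
  unfolding components_def component_rel_def ..

lemma equiv_component_rel: "equiv A (component_rel A E)"
proof (rule equivI)
  show "component_rel A E \<subseteq> A \<times> A" unfolding component_rel_def by blast
  show "refl_on A (component_rel A E)" unfolding component_rel_def refl_on_def by blast
  have "sym ((E \<union> E\<inverse>) \<inter> (A \<times> A))" unfolding sym_def by blast
  then have "sym (((E \<union> E\<inverse>) \<inter> (A \<times> A))\<^sup>*)" by (rule sym_rtrancl)
  then show "sym (component_rel A E)" unfolding component_rel_def by (auto simp: sym_def)
  show "trans (component_rel A E)" unfolding component_rel_def
    by (rule trans_Int) (auto simp: trans_def)
qed

lemma component_subset: "C \<in> components A E \<Longrightarrow> C \<subseteq> A"
  using in_quotient_imp_subset[OF equiv_component_rel] by (simp add: components_eq_quotient)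

lemma component_nonempty: "C \<in> components A E \<Longrightarrow> C \<noteq> {}"
  using in_quotient_imp_non_empty[OF equiv_component_rel] by (simp add: components_eq_quotient)

lemma component_closed:
  assumes "C \<in> components A E" "x \<in> C" "(x,y) \<in> E \<or> (y,x) \<in> E" "y \<in> A"
  shows "y \<in> C"
proof -
  have C: "C \<in> A // component_rel A E" using assms(1) by (simp add: components_eq_quotient)
  have "(x,y) \<in> component_rel A E"
    using assms(3,4) component_subset[OF assms(1)] assms(2) unfolding component_rel_def by blast
  then show ?thesis using in_quotient_imp_closed[OF equiv_component_rel C assms(2)] by blast
qed

lemma finite_components: "finite A \<Longrightarrow> finite (components A E)"
  by (simp add: components_eq_quotient finite_quotient equiv_component_rel equiv_type)

lemma components_disjoint:
  "C \<in> components A E \<Longrightarrow> C' \<in> components A E \<Longrightarrow> C \<noteq> C' \<Longrightarrow> C \<inter> C' = {}"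
  using quotient_disj[OF equiv_component_rel, of C A E C'] by (auto simp: components_eq_quotient)

lemma Union_components: "\<Union>(components A E) = A"
  using Union_quotient[OF equiv_component_rel] by (simp add: components_eq_quotient)

lemma sum_card_components:
  assumes "finite A"
  shows "(\<Sum>C\<in>components A E. card C) = card A"
proof -
  have "finite C" if "C \<in> components A E" for C
    using assms component_subset[OF that] finite_subset by blast
  then have "card (\<Union>(components A E)) = (\<Sum>C\<in>components A E. card C)"
    using components_disjoint[of _ A E] by (intro card_Union_disjoint) (auto simp: pairwise_def disjnt_def)
  then show ?thesis by (simp add: Union_components)
qed

lemma card_components_le_half:
  assumes "finite A"
    and "\<And>x. x \<in> A \<Longrightarrow> \<exists>y\<in>A. y \<noteq> x \<and> ((x,y) \<in> E \<or> (y,x) \<in> E)"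
  shows "2 * card (components A E) \<le> card A"
proof -
  have "2 \<le> card C" if C: "C \<in> components A E" for C
  proof -
    obtain x where "x \<in> C" using component_nonempty[OF C] by blast
    with C obtain y where y: "y \<in> A" "y \<noteq> x" "(x,y) \<in> E \<or> (y,x) \<in> E"
      using assms(2) component_subset by blast
    have "y \<in> C" using component_closed[OF C \<open>x \<in> C\<close> y(3,1)] .
    have "finite C" using assms component_subset[OF C] finite_subset by blast
    have "card {x,y} \<le> card C" using \<open>finite C\<close> \<open>x \<in> C\<close> \<open>y \<in> C\<close> by (intro card_mono) auto
    then show ?thesis using y(2) by simp
  qed
  then have "(\<Sum>C\<in>components A E. 2) \<le> (\<Sum>C\<in>components A E. card C)" by (rule sum_mono)
  then show ?thesis using sum_card_components[OF assms(1)] by simp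
qed

definition unit_dirs :: "(int \<times> int) set" where
  "unit_dirs = {(1,0), (-1,0), (0,1), (0,-1)}"

definition shift :: "int \<times> int \<Rightarrow> int \<times> int \<Rightarrow> int \<times> int" where
  "shift d p = (fst p + fst d, snd p + snd d)"

definition exits :: "int \<times> int \<Rightarrow> (int \<times> int) set \<Rightarrow> (int \<times> int) set" where
  "exits d A = {p \<in> A. shift d p \<notin> A}"

definition edge_towards :: "int \<times> int \<Rightarrow> int \<times> int \<Rightarrow> gedge" where
  "edge_towards d p =
     (if snd d = 0 then H (fst p + min 0 (fst d), snd p) else V (fst p, snd p + min 0 (snd d)))"

definition grid_components :: "(int \<times> int) set \<Rightarrow> (int \<times> int) set set" where
  "grid_components A = components A {(a,b). a \<in> A \<and> b \<in> A \<and> gadj a b}"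

definition num_lines :: "(int \<times> int) set \<Rightarrow> nat" where
  "num_lines T = card (fst ` T) + card (snd ` T)"

lemma card_unit_dirs: "card unit_dirs = 4"
  by (simp add: unit_dirs_def)

lemma proj_component_subset_proj_exits:
  fixes I :: "(int \<times> int) set" and sh :: "int \<times> int \<Rightarrow> int \<times> int"
    and \<pi> \<phi> :: "int \<times> int \<Rightarrow> int"
  assumes fin: "finite I" and T: "T \<in> grid_components I"
    and adj: "\<And>p. gadj p (sh p)"
    and proj: "\<And>p. \<pi> (sh p) = \<pi> p"
    and height: "\<And>p. \<phi> (sh p) = \<phi> p + 1"
  shows "\<pi> ` T \<subseteq> \<pi> ` {p\<in>T. sh p \<notin> I}"
proof
  fix y assume "y \<in> \<pi> ` T"
  have TI: "T \<subseteq> I" using T component_subset unfolding grid_components_def by blast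
  define F where "F = {p\<in>T. \<pi> p = y}"
  have "finite F" "F \<noteq> {}"
    using finite_subset[OF TI fin] \<open>y \<in> \<pi> ` T\<close> unfolding F_def by auto
  then have "Max (\<phi> ` F) \<in> \<phi> ` F" by simp
  then obtain p where p: "p \<in> F" "\<phi> p = Max (\<phi> ` F)" by (metis imageE)
  have "sh p \<notin> F"
  proof
    assume "sh p \<in> F"
    then have "\<phi> (sh p) \<le> Max (\<phi> ` F)" using \<open>finite F\<close> by simp
    then show False using p(2) height[of p] by simp
  qed
  then have "sh p \<notin> T" using proj[of p] p(1) unfolding F_def by auto
  have "sh p \<notin> I"
  proof
    assume "sh p \<in> I"
    moreover have "p \<in> T" using p(1) unfolding F_def by simp
    ultimately have "sh p \<in> T"
      using T TI adj[of p] unfolding grid_components_def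
      by (intro component_closed[of T I _ p "sh p"]) auto
    then show False using \<open>sh p \<notin> T\<close> by simp
  qed
  then show "y \<in> \<pi> ` {p\<in>T. sh p \<notin> I}" using p(1) unfolding F_def by force
qed

lemma sum_card_proj_components_le:
  fixes I :: "(int \<times> int) set" and sh :: "int \<times> int \<Rightarrow> int \<times> int"
    and \<pi> \<phi> :: "int \<times> int \<Rightarrow> int"
  assumes fin: "finite I"
    and adj: "\<And>p. gadj p (sh p)"
    and proj: "\<And>p. \<pi> (sh p) = \<pi> p"
    and height: "\<And>p. \<phi> (sh p) = \<phi> p + 1"
  shows "(\<Sum>T\<in>grid_components I. card (\<pi> ` T)) \<le> card {p\<in>I. sh p \<notin> I}"
proof -
  define B where "B = {p\<in>I. sh p \<notin> I}"
  have TI: "T \<subseteq> I" if "T \<in> grid_components I" for T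
    using that component_subset unfolding grid_components_def by blast
  have finT: "finite T" if "T \<in> grid_components I" for T
    using finite_subset[OF TI[OF that] fin] .
  have "card (\<pi> ` T) \<le> card (T \<inter> B)" if T: "T \<in> grid_components I" for T
  proof -
    have "\<pi> ` T \<subseteq> \<pi> ` (T \<inter> B)"
      using proj_component_subset_proj_exits[of I T sh \<pi> \<phi>, OF fin T adj proj height] TI[OF T]
      unfolding B_def by blast
    then have "card (\<pi> ` T) \<le> card (\<pi> ` (T \<inter> B))"
      using finT[OF T] by (intro card_mono) auto
    also have "\<dots> \<le> card (T \<inter> B)" using finT[OF T] by (intro card_image_le) auto
    finally show ?thesis .
  qed
  then have "(\<Sum>T\<in>grid_components I. card (\<pi> ` T)) \<le> (\<Sum>T\<in>grid_components I. card (T \<inter> B))"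
    by (rule sum_mono)
  also have "\<dots> = card (\<Union>T\<in>grid_components I. T \<inter> B)"
    using finite_components[OF fin] finT components_disjoint[of _ I] unfolding grid_components_def
    by (intro card_UN_disjoint[symmetric]) blast+
  also have "(\<Union>T\<in>grid_components I. T \<inter> B) = B"
    using Union_components[of I] unfolding B_def grid_components_def by blast
  finally show ?thesis unfolding B_def .
qed

lemma sum_num_lines_le_exits:
  assumes "finite I"
  shows "2 * (\<Sum>T\<in>grid_components I. num_lines T) \<le> (\<Sum>d\<in>unit_dirs. card (exits d I))"
proof -
  let ?proj = "\<lambda>d::int \<times> int. if snd d = 0 then snd else fst"
  have "(\<Sum>T\<in>grid_components I. card (?proj d ` T)) \<le> card (exits d I)" if "d \<in> unit_dirs" for d
    unfolding exits_def
    by (rule sum_card_proj_components_le[OF assms, where \<phi> = "\<lambda>p. fst p * fst d + snd p * snd d"])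
      (use that in \<open>auto simp: unit_dirs_def shift_def gadj_def\<close>)
  then have "(\<Sum>d\<in>unit_dirs. \<Sum>T\<in>grid_components I. card (?proj d ` T))
      \<le> (\<Sum>d\<in>unit_dirs. card (exits d I))"
    by (rule sum_mono)
  moreover have "(\<Sum>d\<in>unit_dirs. \<Sum>T\<in>grid_components I. card (?proj d ` T))
      = 2 * (\<Sum>T\<in>grid_components I. num_lines T)"
    by (simp add: unit_dirs_def num_lines_def sum.distrib)
  ultimately show ?thesis by simp
qed

lemma finite_box: "finite (box k)"
  unfolding box_def by simp

lemma card_exits_box:
  assumes "k \<ge> 0" "d \<in> unit_dirs"
  shows "card (exits d (box k)) = nat (2*k+1)"
proof -
  have "exits (1,0) (box k) = {k} \<times> {-k..k}" "exits (-1,0) (box k) = {-k} \<times> {-k..k}"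
    "exits (0,1) (box k) = {-k..k} \<times> {k}" "exits (0,-1) (box k) = {-k..k} \<times> {-k}"
    using assms(1) by (auto simp: exits_def shift_def box_def)
  then show ?thesis using assms by (auto simp: unit_dirs_def card_cartesian_product)
qed

lemma cpairs_finite: "finite (cpairs f k)"
proof -
  have "cpairs f k \<subseteq> (\<lambda>u. (eright (f u), eleft (f (fst u + 1, snd u)))) ` box k
      \<union> (\<lambda>u. (eup (f u), edown (f (fst u, snd u + 1)))) ` box k"
    unfolding cpairs_def by force
  then show ?thesis using finite_box finite_subset by blast
qed

lemma cverts_finite: "finite (cverts f k)"
  unfolding cverts_def using cpairs_finite by auto

lemma gedge_funs_eq:
  "eright p = H p" "eleft p = H (fst p - 1, snd p)" "eup p = V p" "edown p = V (fst p, snd p - 1)"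
  by (cases p; simp)+

lemma cverts_horizontal:
  assumes "(a,b) \<in> box k" "(a+1,b) \<in> box k" "f (a+1,b) \<noteq> (fst (f (a,b)) + 1, snd (f (a,b)))"
  shows "H (f (a,b)) \<in> cverts f k" and "H (fst (f (a+1,b)) - 1, snd (f (a+1,b))) \<in> cverts f k"
proof -
  have "(eright (f (a,b)), eleft (f (a+1,b))) \<in> cpairs f k"
    using assms unfolding cpairs_def by blast
  then show "H (f (a,b)) \<in> cverts f k" "H (fst (f (a+1,b)) - 1, snd (f (a+1,b))) \<in> cverts f k"
    unfolding cverts_def gedge_funs_eq by (metis UnI1 UnI2 fst_conv snd_conv image_eqI)+
qed

lemma cverts_vertical:
  assumes "(a,b) \<in> box k" "(a,b+1) \<in> box k" "f (a,b+1) \<noteq> (fst (f (a,b)), snd (f (a,b)) + 1)"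
  shows "V (f (a,b)) \<in> cverts f k" and "V (fst (f (a,b+1)), snd (f (a,b+1)) - 1) \<in> cverts f k"
proof -
  have "(eup (f (a,b)), edown (f (a,b+1))) \<in> cpairs f k"
    using assms unfolding cpairs_def by blast
  then show "V (f (a,b)) \<in> cverts f k" "V (fst (f (a,b+1)), snd (f (a,b+1)) - 1) \<in> cverts f k"
    unfolding cverts_def gedge_funs_eq by (metis UnI1 UnI2 fst_conv snd_conv image_eqI)+
qed

lemma edge_towards_in_cverts:
  assumes "d \<in> unit_dirs" "u \<in> box k" "shift d u \<in> box k" "shift d (f u) \<notin> f ` box k"
  shows "edge_towards d (f u) \<in> cverts f k"
proof -
  obtain a b where u: "u = (a,b)" by fastforce
  have ne: "f (shift d u) \<noteq> shift d (f u)" using assms(3,4) by (metis image_eqI)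
  consider "d = (1,0)" | "d = (-1,0)" | "d = (0,1)" | "d = (0,-1)"
    using assms(1) unfolding unit_dirs_def by blast
  then show ?thesis
  proof cases
    case 1
    then show ?thesis using cverts_horizontal(1)[of a b k f] assms(2,3) ne
      by (simp add: u shift_def edge_towards_def)
  next
    case 2
    then show ?thesis using cverts_horizontal(2)[of "a-1" b k f] assms(2,3) ne
      by (auto simp: u shift_def edge_towards_def prod_eq_iff)
  next
    case 3
    then show ?thesis using cverts_vertical(1)[of a b k f] assms(2,3) ne
      by (simp add: u shift_def edge_towards_def)
  next
    case 4
    then show ?thesis using cverts_vertical(2)[of a "b-1" k f] assms(2,3) ne
      by (auto simp: u shift_def edge_towards_def prod_eq_iff)
  qed
qed

lemma inj_edge_towards: "inj (edge_towards d)"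
  by (auto simp: inj_def edge_towards_def prod_eq_iff split: if_splits)

lemma edge_towards_exits_disjoint:
  assumes "d \<in> unit_dirs" "d' \<in> unit_dirs" "d \<noteq> d'"
  shows "edge_towards d ` exits d A \<inter> edge_towards d' ` exits d' A = {}"
  using assms by (auto simp: unit_dirs_def exits_def shift_def edge_towards_def)

lemma card_exits_le_cverts:
  assumes "d \<in> unit_dirs"
  shows "card (exits d (f ` box k))
    \<le> card (edge_towards d ` exits d (f ` box k) \<inter> cverts f k) + card (exits d (box k))"
proof -
  let ?I = "f ` box k"
  define U where "U = {u \<in> box k. shift d u \<in> box k \<and> shift d (f u) \<notin> ?I}"
  have fin: "finite U" "finite (exits d (box k))"
    using finite_box by (simp_all add: U_def exits_def)
  have "exits d ?I \<subseteq> f ` U \<union> f ` exits d (box k)"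
    unfolding U_def exits_def by auto
  then have "card (exits d ?I) \<le> card (f ` U \<union> f ` exits d (box k))"
    using fin by (intro card_mono) auto
  also have "\<dots> \<le> card (f ` U) + card (f ` exits d (box k))"
    by (rule card_Un_le)
  also have "card (f ` U) = card (edge_towards d ` f ` U)"
    by (rule card_image[symmetric]) (rule inj_on_subset[OF inj_edge_towards subset_UNIV])
  also have "\<dots> \<le> card (edge_towards d ` exits d ?I \<inter> cverts f k)"
    using cverts_finite edge_towards_in_cverts[OF assms]
    by (intro card_mono) (auto simp: U_def exits_def)
  also have "card (f ` exits d (box k)) \<le> card (exits d (box k))"
    using fin(2) by (rule card_image_le)
  finally show ?thesis by simp
qed

lemma sum_card_exits_le_cverts:
  assumes "k \<ge> 0"
  shows "(\<Sum>d\<in>unit_dirs. card (exits d (f ` box k))) \<le> card (cverts f k) + 4 * nat (2*k+1)"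
proof -
  let ?E = "\<lambda>d. edge_towards d ` exits d (f ` box k) \<inter> cverts f k"
  have "(\<Sum>d\<in>unit_dirs. card (exits d (f ` box k))) \<le> (\<Sum>d\<in>unit_dirs. card (?E d) + nat (2*k+1))"
    using card_exits_le_cverts[of _ f k] card_exits_box[OF assms] by (intro sum_mono) simp
  also have "\<dots> = (\<Sum>d\<in>unit_dirs. card (?E d)) + 4 * nat (2*k+1)"
    by (simp add: sum.distrib card_unit_dirs)
  also have "(\<Sum>d\<in>unit_dirs. card (?E d)) = card (\<Union>d\<in>unit_dirs. ?E d)"
  proof (rule card_UN_disjoint[symmetric])
    show "finite unit_dirs" by (simp add: unit_dirs_def)
    show "\<forall>d\<in>unit_dirs. finite (?E d)" using cverts_finite by blast
    show "\<forall>d\<in>unit_dirs. \<forall>d'\<in>unit_dirs. d \<noteq> d' \<longrightarrow> ?E d \<inter> ?E d' = {}"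
      using edge_towards_exits_disjoint by blast
  qed
  also have "card (\<Union>d\<in>unit_dirs. ?E d) \<le> card (cverts f k)"
    using cverts_finite by (intro card_mono) auto
  finally show ?thesis by simp
qed

lemma cpairs_neq: "(x,y) \<in> cpairs f k \<Longrightarrow> x \<noteq> y"
  unfolding cpairs_def by (auto simp: gedge_funs_eq prod_eq_iff)

lemma card_cverts_le_gamma: "int (card (cverts f k)) \<le> 2 * gamma f k"
proof -
  have "2 * card (components (cverts f k) (cpairs f k)) \<le> card (cverts f k)"
  proof (rule card_components_le_half[OF cverts_finite])
    fix x assume "x \<in> cverts f k"
    then obtain y where "(x,y) \<in> cpairs f k \<or> (y,x) \<in> cpairs f k"
      unfolding cverts_def by force
    then show "\<exists>y\<in>cverts f k. y \<noteq> x \<and> ((x, y) \<in> cpairs f k \<or> (y, x) \<in> cpairs f k)"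
      using cpairs_neq unfolding cverts_def by force
  qed
  then show ?thesis by (simp add: gamma_def)
qed

lemma sum_num_lines_tiles_le:
  assumes "k \<ge> 0"
  shows "(\<Sum>T\<in>tiles f k. int (num_lines T)) \<le> gamma f k + 2*(2*k+1)"
proof -
  have "2 * (\<Sum>T\<in>tiles f k. num_lines T) \<le> (\<Sum>d\<in>unit_dirs. card (exits d (f ` box k)))"
    unfolding tiles_def grid_components_def[symmetric]
    using finite_box by (intro sum_num_lines_le_exits) simp
  also have "\<dots> \<le> card (cverts f k) + 4 * nat (2*k+1)"
    by (rule sum_card_exits_le_cverts[OF assms])
  finally show ?thesis using card_cverts_le_gamma[of f k] assms by (simp flip: of_nat_sum)
qed

lemma card_le_card_fst_times_card_snd: "card T \<le> card (fst ` T) * card (snd ` T)"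
proof (cases "finite T")
  case True
  have "T \<subseteq> fst ` T \<times> snd ` T"
    by (auto intro: rev_image_eqI)
  then have "card T \<le> card (fst ` T \<times> snd ` T)"
    using True by (intro card_mono) auto
  then show ?thesis by (simp add: card_cartesian_product)
qed simp

lemma card_box: "k \<ge> 0 \<Longrightarrow> card (box k) = nat (2*k+1) * nat (2*k+1)"
  unfolding box_def by (simp add: card_cartesian_product)

lemma tile_subset: "T \<in> tiles f k \<Longrightarrow> T \<subseteq> f ` box k"
  unfolding tiles_def by (rule component_subset)

lemma sum_card_tiles:
  assumes "k \<ge> 0" "inj_on f (box k)"
  shows "(\<Sum>T\<in>tiles f k. int (card T)) = (2*k+1) * (2*k+1)"
proof -
  have "(\<Sum>T\<in>tiles f k. card T) = card (f ` box k)"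
    unfolding tiles_def using finite_box by (intro sum_card_components) simp
  also have "\<dots> = nat (2*k+1) * nat (2*k+1)"
    using card_image[OF assms(2)] card_box[OF assms(1)] by simp
  finally show ?thesis using assms(1) by (simp flip: of_nat_sum)
qed

lemma lines_area_bound:
  fixes r c a s :: int
  assumes "a \<le> r*c" "a \<le> s*s" "1 \<le> r" "1 \<le> c" "0 \<le> s"
  shows "2*(s+a) \<le> (r+c)*(s+1)"
proof (cases "r + c \<ge> 2*s")
  case True
  have "2*s*(s+1) \<le> (r+c)*(s+1)" using True assms(5) by (intro mult_right_mono) auto
  then show ?thesis using assms(2) by (simp add: algebra_simps)
next
  case False
  have "0 \<le> (r+c-2)*(2*s-(r+c))" using False assms by (intro mult_nonneg_nonneg) auto
  moreover have "4*(r*c) \<le> (r+c)*(r+c)"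
    using zero_le_square[of "r-c"] by (simp add: algebra_simps)
  ultimately show ?thesis using assms(1) by (simp add: algebra_simps)
qed

lemma lines_area_bound_large:
  fixes r c a s :: int
  assumes "a \<le> r*c" "a \<le> s*s" "36 \<le> a" "0 \<le> r" "0 \<le> c" "0 \<le> s"
  shows "12*s + 2*a \<le> (r+c)*(s+6)"
proof (cases "r + c \<ge> 2*s")
  case True
  have "2*s*(s+6) \<le> (r+c)*(s+6)" using True assms(6) by (intro mult_right_mono) auto
  then show ?thesis using assms(2) by (simp add: algebra_simps)
next
  case False
  have sq: "4*(r*c) \<le> (r+c)*(r+c)"
    using zero_le_square[of "r-c"] by (simp add: algebra_simps)
  have "12 \<le> r + c"
  proof (rule ccontr)
    assume "\<not> 12 \<le> r + c"
    then have "(r+c)*(r+c) \<le> 11*11" using assms(4,5) by (intro mult_mono) auto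
    then show False using sq assms(1,3) by linarith
  qed
  then have "0 \<le> (r+c-12)*(2*s-(r+c))" using False by (intro mult_nonneg_nonneg) auto
  then show ?thesis using assms(1) sq by (simp add: algebra_simps)
qed

lemma tile_num_lines_bounds:
  assumes "k \<ge> 0" "T \<in> tiles f k"
  shows "2*((2*k+1) + int (card T)) \<le> int (num_lines T) * ((2*k+1) + 1)"
    and "36 \<le> card T \<Longrightarrow> 12*(2*k+1) + 2*int (card T) \<le> int (num_lines T) * ((2*k+1) + 6)"
proof -
  let ?r = "int (card (fst ` T))" and ?c = "int (card (snd ` T))" and ?a = "int (card T)"
  have T: "T \<subseteq> f ` box k" by (rule tile_subset[OF assms(2)])
  then have "finite T" using finite_box finite_subset by blast
  moreover have "T \<noteq> {}" using assms(2) unfolding tiles_def by (rule component_nonempty)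
  ultimately have rc: "1 \<le> ?r" "1 \<le> ?c" by (simp_all add: Suc_le_eq card_gt_0_iff)
  have "card T \<le> card (box k)"
    using card_mono[OF finite_imageI[OF finite_box] T] card_image_le[OF finite_box, of f k]
    by linarith
  then have "?a \<le> int (nat (2*k+1)) * int (nat (2*k+1))"
    unfolding card_box[OF assms(1)] by (metis of_nat_le_iff of_nat_mult)
  then have area: "?a \<le> (2*k+1) * (2*k+1)" using assms(1) by simp
  have prod: "?a \<le> ?r * ?c" using card_le_card_fst_times_card_snd[of T] by (simp flip: of_nat_mult)
  have lines: "int (num_lines T) = ?r + ?c" by (simp add: num_lines_def)
  show "2*((2*k+1) + ?a) \<le> int (num_lines T) * ((2*k+1) + 1)"
    unfolding lines by (rule lines_area_bound[OF prod area rc]) (use assms(1) in simp)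
  show "12*(2*k+1) + 2*?a \<le> int (num_lines T) * ((2*k+1) + 6)" if "36 \<le> card T"
    unfolding lines using that assms(1)
    by (intro lines_area_bound_large[OF prod area]) simp_all
qed

lemma family_lower_bound:
  fixes a w :: "'a \<Rightarrow> int" and s g :: int and t :: nat
  assumes "finite Ts" "card Ts = t + 1" "1 \<le> s"
    and area: "(\<Sum>T\<in>Ts. a T) = s*s"
    and each: "\<And>T. T \<in> Ts \<Longrightarrow> 2*(s + a T) \<le> w T * (s+1)"
    and total: "(\<Sum>T\<in>Ts. w T) \<le> g + 2*s"
  shows "real t * (2 - 2 / real_of_int s) \<le> real_of_int g"
proof -
  have "(\<Sum>T\<in>Ts. 2*(s + a T)) = 2*s*(int t + 1) + 2*(s*s)"
    using assms(2) area by (simp add: sum.distrib flip: sum_distrib_left)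
  moreover have "(\<Sum>T\<in>Ts. 2*(s + a T)) \<le> (\<Sum>T\<in>Ts. w T) * (s+1)"
    unfolding sum_distrib_right using each by (rule sum_mono)
  moreover have "(\<Sum>T\<in>Ts. w T) * (s+1) \<le> (g + 2*s) * (s+1)"
    using total assms(3) by (intro mult_right_mono) auto
  ultimately have "2*s*int t \<le> g*(s+1)" by (simp add: algebra_simps)
  have gs: "2 * real_of_int s * real t \<le> real_of_int g * (real_of_int s + 1)"
    using of_int_le_iff[where 'a = real, THEN iffD2, OF \<open>2*s*int t \<le> g*(s+1)\<close>] by simp
  have s: "1 \<le> real_of_int s" using assms(3) by simp
  have "real t * (2 - 2 / real_of_int s) * (real_of_int s + 1)
      = 2 * real_of_int s * real t - 2 * real t / real_of_int s"
    using s by (simp add: field_simps)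
  also have "\<dots> \<le> real_of_int g * (real_of_int s + 1)"
    using gs divide_nonneg_pos[of "2 * real t" "real_of_int s"] s by linarith
  finally show ?thesis using s by (simp add: mult_le_cancel_right_pos)
qed

lemma two_part_bound_arith:
  fixes s t A X Y g :: real
  assumes "9 \<le> s" "0 \<le> t" "A \<le> s*s"
    and "2*s*(t-1) + 2*s*s - 2*A \<le> (s+1)*X" "24*s + 2*A \<le> (s+6)*Y"
    and "X + Y - 2*s \<le> g"
  shows "2*t*(1 - 1/s) + 4 \<le> g"
proof -
  have s0: "s > 0" using assms(1) by auto
  have h1: "s*(s+6)*(2*s*(t-1) + 2*s*s - 2*A) \<le> s*(s+6)*((s+1)*X)"
    using assms(4) s0 by (intro mult_left_mono) auto
  have h2: "s*(s+1)*(24*s + 2*A) \<le> s*(s+1)*((s+6)*Y)"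
    using assms(5) s0 by (intro mult_left_mono) auto
  have h3: "s*(s+1)*(s+6)*(X + Y - 2*s) \<le> s*(s+1)*(s+6)*g"
    using assms(6) s0 by (intro mult_left_mono) auto
  have "9*s \<le> s*s" using assms(1) by (intro mult_right_mono) auto
  then have "0 \<le> 3*s*s - 14*s - 12" using assms(1) by linarith
  then have "0 \<le> 2*t*(s+6) + 10*s*(s*s-A) + 2*s*(3*s*s-14*s-12)"
    using assms(1-3) s0 by (intro add_nonneg_nonneg mult_nonneg_nonneg) auto
  with h1 h2 h3 have "(s+1)*(s+6)*(2*t*s - 2*t + 4*s) \<le> (s+1)*(s+6)*(s*g)"
    by (simp add: algebra_simps)
  then have "2*t*s - 2*t + 4*s \<le> s*g" using s0 by (simp add: mult_le_cancel_left_pos)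
  moreover have "2*t*s - 2*t + 4*s = s * (2*t*(1 - 1/s) + 4)" using s0 by (simp add: field_simps)
  ultimately show ?thesis using s0 by simp
qed

lemma family_lower_bound_two_large:
  fixes a w :: "'a \<Rightarrow> int" and s g :: int and t :: nat
  assumes "finite Ts" "card Ts = t + 1" "1 \<le> s"
    and area: "(\<Sum>T\<in>Ts. a T) = s*s"
    and nonneg: "\<And>T. T \<in> Ts \<Longrightarrow> 0 \<le> a T"
    and each: "\<And>T. T \<in> Ts \<Longrightarrow> 2*(s + a T) \<le> w T * (s+1)"
    and large: "\<And>T. T \<in> Ts \<Longrightarrow> 36 \<le> a T \<Longrightarrow> 12*s + 2*a T \<le> w T * (s+6)"
    and total: "(\<Sum>T\<in>Ts. w T) \<le> g + 2*s"
    and T12: "T1 \<in> Ts" "T2 \<in> Ts" "T1 \<noteq> T2" "36 \<le> a T1" "36 \<le> a T2"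
  shows "2 * real t * (1 - 1 / real_of_int s) + 4 \<le> real_of_int g"
proof -
  define Rest where "Rest = Ts - {T1, T2}"
  have Ts_eq: "Ts = insert T1 (insert T2 Rest)" and "T1 \<notin> Rest" "T2 \<notin> Rest" "finite Rest"
    using T12 assms(1) by (auto simp: Rest_def)
  then have split: "(\<Sum>T\<in>Ts. h T) = h T1 + h T2 + (\<Sum>T\<in>Rest. h T)" for h :: "'a \<Rightarrow> int"
    using T12(3) by simp
  have "card {T1, T2} \<le> card Ts" using T12 assms(1) by (intro card_mono) auto
  then have "1 \<le> t" using T12(3) assms(2) by simp
  have "card Rest = t - 1" using assms(2) T12 unfolding Rest_def by (simp add: card_Diff_subset)
  then have "(\<Sum>T\<in>Rest. 2*(s + a T)) = 2*s*(int t - 1) + 2*(\<Sum>T\<in>Rest. a T)"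
    using \<open>1 \<le> t\<close>
    by (simp add: sum.distrib of_nat_diff flip: sum_distrib_left)
  moreover have "(\<Sum>T\<in>Rest. 2*(s + a T)) \<le> (s+1) * (\<Sum>T\<in>Rest. w T)"
    unfolding sum_distrib_left using each by (intro sum_mono) (auto simp: Rest_def mult.commute)
  moreover have sum_a: "(\<Sum>T\<in>Rest. a T) = s*s - (a T1 + a T2)" using area split[of a] by simp
  ultimately have rest: "2*s*(int t - 1) + 2*(s*s) - 2*(a T1 + a T2) \<le> (s+1) * (\<Sum>T\<in>Rest. w T)"
    by simp
  have big: "24*s + 2*(a T1 + a T2) \<le> (s+6) * (w T1 + w T2)"
    using large[OF T12(1,4)] large[OF T12(2,5)] by (simp add: algebra_simps)
  have "0 \<le> (\<Sum>T\<in>Rest. a T)" using nonneg by (intro sum_nonneg) (auto simp: Rest_def)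
  then have A: "a T1 + a T2 \<le> s*s" using sum_a by simp
  have "9 \<le> s"
  proof (rule ccontr)
    assume "\<not> 9 \<le> s"
    then have "s*s \<le> 8*8" using assms(3) by (intro mult_mono) auto
    then show False using A T12(4,5) by simp
  qed
  have g: "(\<Sum>T\<in>Rest. w T) + (w T1 + w T2) - 2*s \<le> g" using total split[of w] by simp
  note real_le = of_int_le_iff[where 'a = real, THEN iffD2]
  show ?thesis
    by (rule two_part_bound_arith[where A = "of_int (a T1 + a T2)"
          and X = "\<Sum>T\<in>Rest. of_int (w T)" and Y = "of_int (w T1 + w T2)"])
      (use real_le[OF \<open>9 \<le> s\<close>] real_le[OF A] real_le[OF rest] real_le[OF big] real_le[OF g]
        in simp_all)
qed

theorem lemma4p1:
  fixes k n :: int and t :: nat and f :: "int \<times> int \<Rightarrow> int \<times> int"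
  assumes "k \<ge> 1"
    and "inj_on f (box k)"
    and "f ` box k \<subseteq> grid n"
    and "card (tiles f k) = t + 1"
    and "t + 1 \<ge> 2"
  shows "real_of_int (gamma f k) \<ge> real t * (2 - 2 / real_of_int (2*k+1))
    \<and> ((\<exists>T1 \<in> tiles f k. \<exists>T2 \<in> tiles f k. T1 \<noteq> T2 \<and> card T1 > 35 \<and> card T2 > 35)
        \<longrightarrow> real_of_int (gamma f k) \<ge> 2 * real t * (1 - 1 / real_of_int (2*k+1)) + 4)"
proof -
  have k: "k \<ge> 0" and s: "1 \<le> 2*k+1" using assms(1) by simp_all
  have fin: "finite (tiles f k)"
    unfolding tiles_def using finite_box by (intro finite_components) simp
  note area = sum_card_tiles[OF k assms(2)]
  note lines = sum_num_lines_tiles_le[OF k, of f]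
  note each = tile_num_lines_bounds(1)[OF k]
  note large = tile_num_lines_bounds(2)[OF k]
  have "real t * (2 - 2 / real_of_int (2*k+1)) \<le> real_of_int (gamma f k)"
    by (rule family_lower_bound[OF fin assms(4) s area each lines])
  moreover have "2 * real t * (1 - 1 / real_of_int (2*k+1)) + 4 \<le> real_of_int (gamma f k)"
    if "T1 \<in> tiles f k" "T2 \<in> tiles f k" "T1 \<noteq> T2" "card T1 > 35" "card T2 > 35" for T1 T2
    using that by (intro family_lower_bound_two_large[OF fin assms(4) s area _ each large lines])
      (simp_all, linarith+)
  ultimately show ?thesis by blast
qed

end
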